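(* Let $n\in\mathbb{N}$. Then the complete graph $K_n$ is an $\mathcal{N}$ position for Grim if and only if $n$ is even.
   Context: Grim is a two-player game on a finite simple undirected graph. Any isolated vertices of the starting graph are deleted before play begins. Players alternate moves; a move consists of selecting a vertex of the current graph and deleting it together with all its incident edges, after which every vertex that has become isolated is also deleted. The player who makes the last legal move wins (a player facing the empty graph has no move and loses). A graph is an $\mathcal{N}$ position if the player about to move has a winning strategy, and a $\mathcal{P}$ position otherwise. *)

theory Defs
  imports Main
begin

type_synonym 'a graph = "'a set \<times> 'a set set"

definition finite_simple_graph :: "'a graph \<Rightarrow> bool" where
  "finite_simple_graph G \<longleftrightarrow> finite (fst G) \<and>
     (\<forall>e\<in>snd G. e \<subseteq> fst G \<and> card e = 2)"

definition del_isolated :: "'a graph \<Rightarrow> 'a graph" where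
  "del_isolated G = ({v \<in> fst G. \<exists>e\<in>snd G. v \<in> e}, snd G)"

definition grim_move :: "'a graph \<Rightarrow> 'a \<Rightarrow> 'a graph" where
  "grim_move G v = del_isolated (fst G - {v}, {e \<in> snd G. v \<notin> e})"

lemma card_grim_move_less:
  assumes "finite (fst G)" "v \<in> fst G"
  shows "card (fst (grim_move G v)) < card (fst G)"
proof -
  have "fst (grim_move G v) \<subseteq> fst G - {v}"
    by (auto simp: grim_move_def del_isolated_def)
  moreover have "fst G - {v} \<subset> fst G" using assms(2) by auto
  ultimately have "fst (grim_move G v) \<subset> fst G" by blast
  then show ?thesis using assms(1) by (simp add: psubset_card_mono)
qed

text \<open>grim_win G: the player about to move in the current graph G has a
winning strategy (normal play: the player with no legal move loses).
Legal moves are the vertices of the current graph.\<close>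
function grim_win :: "'a graph \<Rightarrow> bool" where
  "grim_win G = (if finite (fst G)
                 then (\<exists>v\<in>fst G. \<not> grim_win (grim_move G v))
                 else False)"
  by auto
termination
  by (relation "measure (\<lambda>G. card (fst G))")
     (auto simp: card_grim_move_less)

declare grim_win.simps [simp del]

definition grim_N_position :: "'a graph \<Rightarrow> bool" where
  "grim_N_position G \<longleftrightarrow> grim_win (del_isolated G)"

definition grim_P_position :: "'a graph \<Rightarrow> bool" where
  "grim_P_position G \<longleftrightarrow> \<not> grim_win (del_isolated G)"

definition complete_graph :: "nat \<Rightarrow> nat graph" where
  "complete_graph n = ({..<n}, {{i, j} | i j. i < n \<and> j < n \<and> i \<noteq> j})"

end

theory Submission
  imports Defs
begin

text \<open>Deleting a vertex of a complete graph with at least two vertices isolates nothing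
  unless exactly one vertex is left, so Grim on \<open>K\<^sub>n\<close> is the game of removing one vertex
  per move until at most one remains: after \<open>n - 1\<close> moves the game is over, and the
  first player makes the last move iff \<open>n\<close> is even.\<close>

definition complete_graph_on :: "'a set \<Rightarrow> 'a graph" where
  "complete_graph_on S = (S, {{i, j} | i j. i \<in> S \<and> j \<in> S \<and> i \<noteq> j})"

lemma complete_graph_eq_complete_graph_on: "complete_graph n = complete_graph_on {..<n}"
  unfolding complete_graph_def complete_graph_on_def by auto

lemma grim_move_complete_graph_on:
  "grim_move (complete_graph_on S) v = del_isolated (complete_graph_on (S - {v}))"
  unfolding grim_move_def complete_graph_on_def by (auto intro!: arg_cong[where f = del_isolated])

lemma del_isolated_complete_graph_on:
  "del_isolated (complete_graph_on S) = ({v \<in> S. \<exists>w\<in>S. w \<noteq> v}, snd (complete_graph_on S))"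
proof -
  have "(\<exists>e\<in>snd (complete_graph_on S). v \<in> e) \<longleftrightarrow> (\<exists>w\<in>S. w \<noteq> v)" if "v \<in> S" for v
  proof
    assume "\<exists>e\<in>snd (complete_graph_on S). v \<in> e"
    then obtain i j where "i \<in> S" "j \<in> S" "i \<noteq> j" "v \<in> {i, j}"
      by (auto simp: complete_graph_on_def)
    then show "\<exists>w\<in>S. w \<noteq> v" by (metis insert_iff singleton_iff)
  next
    assume "\<exists>w\<in>S. w \<noteq> v"
    then obtain w where "w \<in> S" "w \<noteq> v" by blast
    then have "{v, w} \<in> snd (complete_graph_on S)"
      using that by (auto simp: complete_graph_on_def)
    then show "\<exists>e\<in>snd (complete_graph_on S). v \<in> e" by blast
  qed
  then have "{v \<in> S. \<exists>e\<in>snd (complete_graph_on S). v \<in> e} = {v \<in> S. \<exists>w\<in>S. w \<noteq> v}"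
    by blast
  moreover have "fst (complete_graph_on S) = S" by (simp add: complete_graph_on_def)
  ultimately show ?thesis by (simp only: del_isolated_def)
qed

lemma del_isolated_complete_graph_on_card_ge_2:
  assumes "finite S" "card S \<ge> 2"
  shows "del_isolated (complete_graph_on S) = complete_graph_on S"
proof -
  have "\<exists>w\<in>S. w \<noteq> v" if "v \<in> S" for v
  proof -
    have "card (S - {v}) \<noteq> 0" using that assms by simp
    then have "S - {v} \<noteq> {}" by (metis card.empty)
    then show ?thesis by blast
  qed
  then show ?thesis
    unfolding del_isolated_complete_graph_on by (auto simp: complete_graph_on_def)
qed

lemma fst_del_isolated_complete_graph_on_card_le_1:
  assumes "finite S" "card S \<le> 1"
  shows "fst (del_isolated (complete_graph_on S)) = {}"
  using assms by (auto simp: del_isolated_complete_graph_on card_le_Suc0_iff_eq)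

lemma not_grim_win_empty: "fst G = {} \<Longrightarrow> \<not> grim_win G"
  by (subst grim_win.simps) auto

lemma grim_win_complete_graph_on:
  assumes "finite S"
  shows "grim_win (del_isolated (complete_graph_on S)) \<longleftrightarrow> S \<noteq> {} \<and> even (card S)"
  using assms
proof (induction "card S" arbitrary: S)
  case 0
  then show ?case
    by (simp add: not_grim_win_empty fst_del_isolated_complete_graph_on_card_le_1)
next
  case (Suc n)
  show ?case
  proof (cases "n = 0")
    case True
    then show ?thesis using Suc.hyps(2)[symmetric] Suc.prems
      by (simp add: not_grim_win_empty fst_del_isolated_complete_graph_on_card_le_1)
  next
    case False
    have after_move: "\<not> grim_win (grim_move (complete_graph_on S) v) \<longleftrightarrow> odd n"
      if "v \<in> S" for v
    proof -
      have card_rest: "card (S - {v}) = n"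
        using that Suc.hyps(2) Suc.prems by (simp add: card_Diff_singleton)
      then have "S - {v} \<noteq> {}" using False by force
      with card_rest show ?thesis
        using Suc.hyps(1)[of "S - {v}"] Suc.prems by (simp add: grim_move_complete_graph_on)
    qed
    have "S \<noteq> {}" using Suc.hyps(2) by auto
    have "grim_win (complete_graph_on S) \<longleftrightarrow> (\<exists>v\<in>S. \<not> grim_win (grim_move (complete_graph_on S) v))"
      using Suc.prems by (subst grim_win.simps) (simp add: complete_graph_on_def)
    also have "\<dots> \<longleftrightarrow> odd n" using after_move \<open>S \<noteq> {}\<close> by blast
    finally show ?thesis
      using Suc.hyps(2)[symmetric] Suc.prems False \<open>S \<noteq> {}\<close>
      by (simp add: del_isolated_complete_graph_on_card_ge_2)
  qed
qed

theorem lemma3p1: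
  fixes n :: nat
  assumes "n \<ge> 1"
  shows "grim_N_position (complete_graph n) \<longleftrightarrow> even n"
  using assms grim_win_complete_graph_on[of "{..<n}"]
  by (simp add: grim_N_position_def complete_graph_eq_complete_graph_on lessThan_empty_iff)

end
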